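(* The Lehner expansion of an irrational $\alpha\in(1,2)$ is eventually periodic if and only if $\alpha$ is a quadratic irrational.
   Context: The Lehner map on $[1,2)$ is $L(x)=\frac{1}{2-x}$ for $x\in[1,3/2)$ and $L(x)=\frac{1}{x-1}$ for $x\in[3/2,2)$. For irrational $x\in(1,2)$, its Lehner digits are $(a_i,\epsilon_i)=(2,-1)$ if $L^i(x)\in[1,3/2)$ and $(1,+1)$ if $L^i(x)\in[3/2,2)$, and $x=a_0+\cfrac{\epsilon_0}{a_1+\cfrac{\epsilon_1}{a_2+\cdots}}$ is its Lehner expansion. Eventually periodic means the digit sequence $((a_i,\epsilon_i))_{i\ge0}$ is eventually periodic. *)

theory Defs
  imports Complex_Main
begin

definition lehner_map :: "real \<Rightarrow> real" where
  "lehner_map x = (if x < 3/2 then 1 / (2 - x) else 1 / (x - 1))"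

text \<open>The i-th Lehner digit (a_i, epsilon_i) of x.\<close>
definition lehner_digit :: "real \<Rightarrow> nat \<Rightarrow> int \<times> int" where
  "lehner_digit x i =
     (if (lehner_map ^^ i) x < 3/2 then (2, -1) else (1, 1))"

definition eventually_periodic :: "(nat \<Rightarrow> 'a) \<Rightarrow> bool" where
  "eventually_periodic f \<longleftrightarrow> (\<exists>N p. p > 0 \<and> (\<forall>i\<ge>N. f (i + p) = f i))"

definition quadratic_irrational :: "real \<Rightarrow> bool" where
  "quadratic_irrational x \<longleftrightarrow> x \<notin> \<rat> \<and>
     (\<exists>a b c :: int. a \<noteq> 0 \<and> of_int a * x^2 + of_int b * x + of_int c = 0)"

end

theory Submission
  imports Defs
begin

text \<open>
  In the coordinate \<open>u = x - 1\<close> the inverse branches of the Lehner map are the integer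
  Moebius maps \<open>u \<mapsto> u / (1 + u)\<close> and \<open>u \<mapsto> 1 / (1 + u)\<close>. Hence \<open>x - 1 = M\<^sub>n (L\<^sup>n x - 1)\<close>
  for a unimodular matrix \<open>M\<^sub>n\<close> that depends only on the first \<open>n\<close> digits and whose
  denominators grow with \<open>n\<close>; so the digits determine \<open>x\<close>. If the expansion is eventually
  periodic, some \<open>L\<^sup>N x\<close> is therefore a fixed point of a nontrivial integer Moebius map, hence
  a quadratic irrational, and quadratic irrationality pulls back along \<open>L\<close>.

  Conversely, let \<open>x\<close> be a root of \<open>A t\<^sup>2 + B t + C\<close> and move the conjugate root along the
  branches chosen by the orbit of \<open>x\<close>; the polynomial transforms accordingly, with constant
  discriminant. The conjugate cannot stay in \<open>(1, 2)\<close> forever, as it would then have the same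
  digits as \<open>x\<close>, and once outside it stays below \<open>1\<close>. From then on the polynomial has roots
  on both sides of \<open>1\<close>, which bounds its coefficients by the discriminant, so some polynomial,
  and with it some point \<open>L\<^sup>n x\<close>, recurs.
\<close>

definition lehner_branch :: "bool \<Rightarrow> real \<Rightarrow> real" where
  "lehner_branch b z = (if b then 1 / (2 - z) else 1 / (z - 1))"

lemma lehner_map_eq_branch: "lehner_map x = lehner_branch (x < 3/2) x"
  by (simp add: lehner_map_def lehner_branch_def)

lemma lehner_branch_not_Rats:
  assumes "z \<notin> \<rat>"
  shows "lehner_branch b z \<notin> \<rat>"
proof
  assume "lehner_branch b z \<in> \<rat>"
  then have "1 / lehner_branch b z \<in> \<rat>" by simp
  moreover have "z = (if b then 2 - 1 / lehner_branch b z else 1 + 1 / lehner_branch b z)"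
    by (simp add: lehner_branch_def)
  ultimately have "z \<in> \<rat>" by (cases b) (metis Rats_diff Rats_number_of, metis Rats_add Rats_1)
  with assms show False by simp
qed

lemma lehner_map_not_Rats: "x \<notin> \<rat> \<Longrightarrow> lehner_map x \<notin> \<rat>"
  by (simp add: lehner_map_eq_branch lehner_branch_not_Rats)

lemma lehner_map_bounds:
  assumes "1 < x" "x < 2" "x \<notin> \<rat>"
  shows "1 < lehner_map x" "lehner_map x < 2"
proof -
  have "x \<noteq> 3/2" using assms(3) Rats_number_of Rats_divide by metis
  then show "1 < lehner_map x" "lehner_map x < 2"
    using assms(1,2) by (auto simp: lehner_map_def field_simps)
qed

lemma lehner_orbit:
  assumes "1 < x" "x < 2" "x \<notin> \<rat>"
  shows "1 < (lehner_map ^^ n) x" "(lehner_map ^^ n) x < 2" "(lehner_map ^^ n) x \<notin> \<rat>"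
  by (induction n) (use assms lehner_map_bounds lehner_map_not_Rats in auto)

lemma lehner_digit_funpow: "lehner_digit ((lehner_map ^^ k) x) i = lehner_digit x (i + k)"
  by (simp add: lehner_digit_def funpow_add)

lemma lehner_digit_eq_iff:
  "lehner_digit x i = lehner_digit y j \<longleftrightarrow>
     ((lehner_map ^^ i) x < 3/2 \<longleftrightarrow> (lehner_map ^^ j) y < 3/2)"
  by (simp add: lehner_digit_def)

section \<open>Convergent matrices\<close>

definition mobius :: "int \<times> int \<times> int \<times> int \<Rightarrow> real \<Rightarrow> real" where
  "mobius M u = (case M of (p, q, r, w) \<Rightarrow> (of_int p * u + of_int q) / (of_int r * u + of_int w))"

text \<open>Right multiplication by the matrix of \<open>u \<mapsto> u / (1 + u)\<close> resp. \<open>u \<mapsto> 1 / (1 + u)\<close>,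
  the inverses of the two branches of the Lehner map written in the coordinate \<open>u = x - 1\<close>.\<close>
definition mobius_step :: "bool \<Rightarrow> int \<times> int \<times> int \<times> int \<Rightarrow> int \<times> int \<times> int \<times> int" where
  "mobius_step b M = (case M of (p, q, r, w) \<Rightarrow>
     if b then (p + q, q, r + w, w) else (q, p + q, w, r + w))"

fun lehner_matrix :: "real \<Rightarrow> nat \<Rightarrow> int \<times> int \<times> int \<times> int" where
  "lehner_matrix x 0 = (1, 0, 0, 1)"
| "lehner_matrix x (Suc n) = mobius_step ((lehner_map ^^ n) x < 3/2) (lehner_matrix x n)"

lemma mobius_mobius_step:
  assumes "1 < z" "z < 2"
  shows "mobius M (z - 1) = mobius (mobius_step (z < 3/2) M) (lehner_map z - 1)"
proof -
  obtain p q r w where M: "M = (p, q, r, w)" by (cases M) auto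
  define u where "u = z - 1"
  have u: "0 < u" "u < 1" using assms by (simp_all add: u_def)
  show ?thesis
  proof (cases "z < 3/2")
    case True
    then have v: "lehner_map z - 1 = u / (1 - u)"
      using assms by (simp add: lehner_map_def u_def field_simps)
    have nd: "(of_int p + of_int q) * u / (1 - u) + of_int q = (of_int p * u + of_int q) / (1 - u)"
         "(of_int r + of_int w) * u / (1 - u) + of_int w = (of_int r * u + of_int w) / (1 - u)"
      using u by (simp_all add: field_simps)
    from True show ?thesis
      using u by (simp add: M v mobius_def mobius_step_def u_def[symmetric] nd)
  next
    case False
    then have v: "lehner_map z - 1 = (1 - u) / u"
      using assms by (simp add: lehner_map_def u_def field_simps)
    have nd: "of_int q * (1 - u) / u + (of_int p + of_int q) = (of_int p * u + of_int q) / u"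
         "of_int w * (1 - u) / u + (of_int r + of_int w) = (of_int r * u + of_int w) / u"
      using u by (simp_all add: field_simps)
    from False show ?thesis
      using u by (simp add: M v mobius_def mobius_step_def u_def[symmetric] nd)
  qed
qed

lemma lehner_matrix_mobius:
  assumes "1 < x" "x < 2" "x \<notin> \<rat>"
  shows "x - 1 = mobius (lehner_matrix x n) ((lehner_map ^^ n) x - 1)"
proof (induction n)
  case (Suc n)
  then show ?case
    using mobius_mobius_step[OF lehner_orbit(1,2)[OF assms, of n]] by simp
qed (simp add: mobius_def)

lemma mobius_step_bounds:
  assumes "0 \<le> r" "1 \<le> w" "k \<le> w * (r + w)" "\<bar>p * w - q * r\<bar> = 1"
    and "mobius_step b (p, q, r, w) = (p', q', r', w')"
  shows "0 \<le> r'" "1 \<le> w'" "k + 1 \<le> w' * (r' + w')" "\<bar>p' * w' - q' * r'\<bar> = 1"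
proof -
  have "1 * 1 \<le> w * w" "1 * 1 \<le> (r + w) * (r + w)"
    using assms(1,2) by (intro mult_mono; simp)+
  then show "0 \<le> r'" "1 \<le> w'" "k + 1 \<le> w' * (r' + w')" "\<bar>p' * w' - q' * r'\<bar> = 1"
    using assms by (auto simp: mobius_step_def algebra_simps abs_minus_commute split: if_splits)
qed

lemma lehner_matrix_bounds:
  assumes "lehner_matrix x n = (p, q, r, w)"
  shows "0 \<le> r \<and> 1 \<le> w \<and> int n + 1 \<le> w * (r + w) \<and> \<bar>p * w - q * r\<bar> = 1"
  using assms
proof (induction n arbitrary: p q r w)
  case (Suc n)
  obtain p0 q0 r0 w0 where "lehner_matrix x n = (p0, q0, r0, w0)" by (cases "lehner_matrix x n") auto
  with Suc show ?case
    using mobius_step_bounds[of r0 w0 "int n + 1" p0 q0] by simp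
qed auto

lemma lehner_matrix_cong:
  assumes "\<forall>i<n. lehner_digit x i = lehner_digit y i"
  shows "lehner_matrix x n = lehner_matrix y n"
  using assms by (induction n) (simp_all add: lehner_digit_eq_iff)

lemma mobius_denominator_bound:
  fixes u v r w :: real
  assumes "0 < u" "u < 1" "0 < v" "v < 1" "0 \<le> r" "1 \<le> w"
  shows "\<bar>u - v\<bar> * (w * (r + w)) \<le> (r * u + w) * (r * v + w)"
proof (cases "u \<le> v")
  case True
  have "(r * u + w) * (r * v + w) - (v - u) * (w * (r + w)) = r * r * u * v + 2 * r * w * u + w * w * (1 - v) + u * w * w"
    by (simp add: algebra_simps)
  moreover have "r * r * u * v \<ge> 0" "r * w * u \<ge> 0" "w * w * (1 - v) \<ge> 0" "u * w * w \<ge> 0"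
    using assms by auto
  ultimately show ?thesis using True by (simp add: abs_if)
next
  case False
  have "(r * u + w) * (r * v + w) - (u - v) * (w * (r + w)) = r * r * u * v + 2 * r * w * v + w * w * (1 - u) + v * w * w"
    by (simp add: algebra_simps)
  moreover have "r * r * u * v \<ge> 0" "r * w * v \<ge> 0" "w * w * (1 - u) \<ge> 0" "v * w * w \<ge> 0"
    using assms by auto
  ultimately show ?thesis using False by (simp add: abs_if)
qed

lemma mobius_diff_le:
  assumes "0 < u" "u < 1" "0 < v" "v < 1" "0 \<le> r" "1 \<le> w" "\<bar>p * w - q * r\<bar> = 1"
  shows "\<bar>mobius (p, q, r, w) u - mobius (p, q, r, w) v\<bar> \<le> 1 / (of_int w * (of_int r + of_int w))"
proof -
  have ru: "of_int r * u \<ge> 0" "of_int r * v \<ge> 0" using assms by auto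
  have den: "of_int r * u + of_int w > 0" "of_int r * v + of_int w > 0" using ru assms(6) by linarith+
  have det: "\<bar>of_int p * of_int w - of_int q * of_int r\<bar> = (1::real)"
    using assms(7) by (metis of_int_1 of_int_abs of_int_diff of_int_mult)
  have "mobius (p, q, r, w) u - mobius (p, q, r, w) v
      = (of_int p * of_int w - of_int q * of_int r) * (u - v) / ((of_int r * u + of_int w) * (of_int r * v + of_int w))"
    using den by (simp add: mobius_def field_simps)
  then have "\<bar>mobius (p, q, r, w) u - mobius (p, q, r, w) v\<bar>
      = \<bar>u - v\<bar> / ((of_int r * u + of_int w) * (of_int r * v + of_int w))"
    using den det by (simp add: abs_mult)
  also have "\<dots> \<le> 1 / (of_int w * (of_int r + of_int w))"
    using mobius_denominator_bound[OF assms(1-4), of "of_int r" "of_int w"] den assms(5,6)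
    by (simp add: divide_simps mult.commute)
  finally show ?thesis .
qed

lemma lehner_digit_inj:
  assumes x: "1 < x" "x < 2" "x \<notin> \<rat>" and y: "1 < y" "y < 2" "y \<notin> \<rat>"
    and digits: "lehner_digit x = lehner_digit y"
  shows "x = y"
proof (rule ccontr)
  assume "x \<noteq> y"
  then obtain n where n: "n \<noteq> 0" "inverse (real n) < \<bar>x - y\<bar>"
    using real_arch_inverse[of "\<bar>x - y\<bar>"] by auto
  obtain p q r w where M: "lehner_matrix x n = (p, q, r, w)" by (cases "lehner_matrix x n") auto
  then have My: "lehner_matrix y n = (p, q, r, w)" using lehner_matrix_cong digits by metis
  note bounds = lehner_matrix_bounds[OF M]
  have "\<bar>x - y\<bar> = \<bar>mobius (p, q, r, w) ((lehner_map ^^ n) x - 1) - mobius (p, q, r, w) ((lehner_map ^^ n) y - 1)\<bar>"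
    using lehner_matrix_mobius[OF x, of n] lehner_matrix_mobius[OF y, of n] M My by (simp add: abs_minus_commute)
  also have "\<dots> \<le> 1 / (of_int w * (of_int r + of_int w))"
    using bounds lehner_orbit[OF x, of n] lehner_orbit[OF y, of n] by (intro mobius_diff_le) auto
  also have "\<dots> \<le> 1 / (real n + 1)"
  proof -
    have "real n + 1 \<le> of_int w * (of_int r + of_int w)"
      using bounds by (metis of_int_add of_int_le_iff of_int_mult of_int_of_nat_eq of_int_1)
    then show ?thesis by (intro divide_left_mono) auto
  qed
  also have "\<dots> \<le> inverse (real n)" using n(1) by (simp add: divide_simps)
  finally show False using n(2) by simp
qed

section \<open>Eventually periodic expansions\<close>

definition int_quadratic_root :: "real \<Rightarrow> bool" where
  "int_quadratic_root x \<longleftrightarrow>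
     (\<exists>a b c :: int. (a, b, c) \<noteq> (0, 0, 0) \<and> of_int a * x^2 + of_int b * x + of_int c = 0)"

lemma int_quadratic_root_affine:
  assumes "e \<noteq> 0" and "int_quadratic_root (of_int k + of_int e * x)"
  shows "int_quadratic_root x"
proof -
  obtain a b c :: int where nz: "(a, b, c) \<noteq> (0, 0, 0)"
    and root: "of_int a * (of_int k + of_int e * x)^2 + of_int b * (of_int k + of_int e * x) + of_int c = 0"
    using assms(2) unfolding int_quadratic_root_def by blast
  have "of_int (a * e^2) * x^2 + of_int (2 * a * k * e + b * e) * x + of_int (a * k^2 + b * k + c) = 0"
    using root by (simp add: algebra_simps power2_eq_square)
  moreover have "(a * e^2, 2 * a * k * e + b * e, a * k^2 + b * k + c) \<noteq> (0, 0, 0)"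
    using nz assms(1) by auto
  ultimately show ?thesis unfolding int_quadratic_root_def by blast
qed

lemma int_quadratic_root_inverse:
  assumes "s \<noteq> 0" and "int_quadratic_root (1 / s)"
  shows "int_quadratic_root s"
proof -
  obtain a b c :: int where nz: "(a, b, c) \<noteq> (0, 0, 0)"
    and root: "of_int a * (1 / s)^2 + of_int b * (1 / s) + of_int c = 0"
    using assms(2) unfolding int_quadratic_root_def by blast
  have "of_int c * s^2 + of_int b * s + of_int a = s^2 * (of_int a * (1 / s)^2 + of_int b * (1 / s) + of_int c)"
    using assms(1) by (simp add: field_simps power2_eq_square)
  with root have "of_int c * s^2 + of_int b * s + of_int a = 0" by simp
  moreover have "(c, b, a) \<noteq> (0, 0, 0)" using nz by auto
  ultimately show ?thesis unfolding int_quadratic_root_def by blast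
qed

lemma int_quadratic_root_lehner_map:
  assumes "1 < x" "x < 2" "int_quadratic_root (lehner_map x)"
  shows "int_quadratic_root x"
proof (cases "x < 3/2")
  case True
  then have "int_quadratic_root (1 / (2 - x))" using assms(3) by (simp add: lehner_map_def)
  then have "int_quadratic_root (of_int 2 + of_int (-1) * x)"
    using int_quadratic_root_inverse[of "2 - x"] assms(2) by simp
  then show ?thesis by (rule int_quadratic_root_affine[rotated]) simp
next
  case False
  then have "int_quadratic_root (1 / (x - 1))" using assms(3) by (simp add: lehner_map_def)
  then have "int_quadratic_root (of_int (-1) + of_int 1 * x)"
    using int_quadratic_root_inverse[of "x - 1"] assms(1) by simp
  then show ?thesis by (rule int_quadratic_root_affine[rotated]) simp
qed

lemma int_quadratic_root_funpow:
  assumes "1 < x" "x < 2" "x \<notin> \<rat>" "int_quadratic_root ((lehner_map ^^ n) x)"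
  shows "int_quadratic_root x"
  using assms(4)
proof (induction n)
  case (Suc n)
  then show ?case using int_quadratic_root_lehner_map[OF lehner_orbit(1,2)[OF assms(1-3)]] by simp
qed simp

lemma quadratic_irrationalI:
  assumes "x \<notin> \<rat>" "int_quadratic_root x"
  shows "quadratic_irrational x"
proof -
  obtain a b c :: int where nz: "(a, b, c) \<noteq> (0, 0, 0)"
    and root: "of_int a * x^2 + of_int b * x + of_int c = 0"
    using assms(2) unfolding int_quadratic_root_def by blast
  have "a \<noteq> 0"
  proof
    assume "a = 0"
    with nz root have "b \<noteq> 0" by auto
    with root \<open>a = 0\<close> have "x = - of_int c / of_int b" by (simp add: field_simps)
    with assms(1) show False by simp
  qed
  with root assms(1) show ?thesis unfolding quadratic_irrational_def by blast
qed

lemma lehner_periodic_point_quadratic: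
  assumes y: "1 < y" "y < 2" "y \<notin> \<rat>" and "p > 0" and periodic: "(lehner_map ^^ p) y = y"
  shows "int_quadratic_root y"
proof -
  obtain P Q R W where M: "lehner_matrix y p = (P, Q, R, W)" by (cases "lehner_matrix y p") auto
  note bounds = lehner_matrix_bounds[OF M]
  have "R \<noteq> 0"
  proof
    assume "R = 0"
    then have "\<bar>W * P\<bar> = 1" using bounds by (simp add: mult.commute)
    then have "\<bar>W\<bar> = 1" by (rule abs_zmult_eq_1)
    then have "W = 1" using bounds by simp
    with \<open>R = 0\<close> bounds \<open>p > 0\<close> show False by simp
  qed
  have "of_int R * (y - 1) \<ge> (0::real)" "of_int W \<ge> (1::real)" using bounds y(1) by simp_all
  then have den: "of_int R * (y - 1) + of_int W > (0::real)" by linarith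
  have "y - 1 = (of_int P * (y - 1) + of_int Q) / (of_int R * (y - 1) + of_int W)"
    using lehner_matrix_mobius[OF y, of p] periodic M by (simp add: mobius_def)
  then have "(y - 1) * (of_int R * (y - 1) + of_int W) = of_int P * (y - 1) + of_int Q"
    using den by (simp add: field_simps)
  then have "of_int R * y^2 + of_int (W - P - 2 * R) * y + of_int (R - W + P - Q) = 0"
    by (simp add: algebra_simps power2_eq_square)
  with \<open>R \<noteq> 0\<close> show ?thesis unfolding int_quadratic_root_def by blast
qed

lemma eventually_periodic_imp_quadratic_irrational:
  assumes a: "1 < \<alpha>" "\<alpha> < 2" "\<alpha> \<notin> \<rat>" and "eventually_periodic (lehner_digit \<alpha>)"
  shows "quadratic_irrational \<alpha>"
proof -
  obtain N p where "p > 0" and per: "\<forall>i\<ge>N. lehner_digit \<alpha> (i + p) = lehner_digit \<alpha> i"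
    using assms(4) unfolding eventually_periodic_def by blast
  define y where "y = (lehner_map ^^ N) \<alpha>"
  note y = lehner_orbit[OF a, of N, folded y_def]
  have "lehner_digit ((lehner_map ^^ p) y) = lehner_digit y"
  proof
    fix i
    show "lehner_digit ((lehner_map ^^ p) y) i = lehner_digit y i"
      using per[rule_format, of "i + N"] by (simp add: y_def lehner_digit_funpow add.commute add.left_commute)
  qed
  then have "(lehner_map ^^ p) y = y" using lehner_digit_inj[OF lehner_orbit[OF y, of p] y] by blast
  then have "int_quadratic_root y" using lehner_periodic_point_quadratic[OF y \<open>p > 0\<close>] by blast
  then show ?thesis
    using int_quadratic_root_funpow[OF a] quadratic_irrationalI a(3) y_def by blast
qed

section \<open>Quadratic irrationals\<close>

definition quadratic_roots :: "int \<times> int \<times> int \<Rightarrow> real \<Rightarrow> real \<Rightarrow> bool" where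
  "quadratic_roots f x y \<longleftrightarrow> (case f of (A, B, C) \<Rightarrow>
     A \<noteq> 0 \<and> of_int B = - of_int A * (x + y) \<and> of_int C = of_int A * x * y)"

definition discr :: "int \<times> int \<times> int \<Rightarrow> int" where
  "discr f = (case f of (A, B, C) \<Rightarrow> B^2 - 4 * A * C)"

text \<open>The coefficients of \<open>s\<^sup>2 f(2 - 1/s)\<close> resp. \<open>s\<^sup>2 f(1 + 1/s)\<close> for \<open>f(t) = A t\<^sup>2 + B t + C\<close>.\<close>
definition quadratic_step :: "bool \<Rightarrow> int \<times> int \<times> int \<Rightarrow> int \<times> int \<times> int" where
  "quadratic_step b f = (case f of (A, B, C) \<Rightarrow>
     if b then (4 * A + 2 * B + C, - 4 * A - B, A) else (A + B + C, 2 * A + B, A))"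

fun conjugate_orbit :: "real \<Rightarrow> real \<Rightarrow> nat \<Rightarrow> real" where
  "conjugate_orbit x y 0 = y"
| "conjugate_orbit x y (Suc n) = lehner_branch ((lehner_map ^^ n) x < 3/2) (conjugate_orbit x y n)"

fun quadratic_orbit :: "real \<Rightarrow> int \<times> int \<times> int \<Rightarrow> nat \<Rightarrow> int \<times> int \<times> int" where
  "quadratic_orbit x f 0 = f"
| "quadratic_orbit x f (Suc n) = quadratic_step ((lehner_map ^^ n) x < 3/2) (quadratic_orbit x f n)"

lemma discr_quadratic_orbit: "discr (quadratic_orbit x f n) = discr f"
proof (induction n)
  case (Suc n)
  then show ?case
    by (cases "quadratic_orbit x f n")
       (simp add: quadratic_step_def discr_def power2_eq_square algebra_simps)
qed simp

lemma quadratic_roots_not_Rats: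
  assumes "quadratic_roots f x y" "x \<notin> \<rat>"
  shows "y \<notin> \<rat>"
proof
  obtain A B C where f: "f = (A, B, C)" by (cases f) auto
  assume "y \<in> \<rat>"
  have "x = - of_int B / of_int A - y" using assms(1) by (simp add: f quadratic_roots_def field_simps)
  also have "\<dots> \<in> \<rat>" using \<open>y \<in> \<rat>\<close> by simp
  finally show False using assms(2) by simp
qed

lemma quadratic_roots_reflect:
  assumes "quadratic_roots (A, B, C) x y"
  shows "quadratic_roots (A, - 4 * A - B, 4 * A + 2 * B + C) (2 - x) (2 - y)"
  using assms by (simp add: quadratic_roots_def algebra_simps)

lemma quadratic_roots_shift:
  assumes "quadratic_roots (A, B, C) x y"
  shows "quadratic_roots (A, 2 * A + B, A + B + C) (x - 1) (y - 1)"
  using assms by (simp add: quadratic_roots_def algebra_simps)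

lemma quadratic_roots_reciprocal:
  assumes "quadratic_roots (A, B, C) x y" "x \<noteq> 0" "y \<noteq> 0"
  shows "quadratic_roots (C, B, A) (1 / x) (1 / y)"
proof -
  have A: "A \<noteq> 0" and B: "of_int B = - of_int A * (x + y)" and C: "of_int C = of_int A * x * y"
    using assms(1) by (simp_all add: quadratic_roots_def)
  have "of_int C \<noteq> (0::real)" using A assms(2,3) by (simp add: C)
  then have "C \<noteq> 0" by auto
  with assms(2,3) show ?thesis by (simp add: quadratic_roots_def B C field_simps)
qed

lemma quadratic_roots_step:
  assumes roots: "quadratic_roots f x y" and "x \<notin> \<rat>"
  shows "quadratic_roots (quadratic_step b f) (lehner_branch b x) (lehner_branch b y)"
proof -
  obtain A B C where f: "f = (A, B, C)" by (cases f) auto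
  have "y \<notin> \<rat>" using quadratic_roots_not_Rats assms by blast
  with assms(2) have "x \<noteq> 1" "x \<noteq> 2" "y \<noteq> 1" "y \<noteq> 2" by auto
  then show ?thesis
    using quadratic_roots_reciprocal[OF quadratic_roots_reflect[OF roots[unfolded f]]]
      quadratic_roots_reciprocal[OF quadratic_roots_shift[OF roots[unfolded f]]]
    by (simp add: f quadratic_step_def lehner_branch_def)
qed

lemma quadratic_orbit_roots:
  assumes x: "1 < x" "x < 2" "x \<notin> \<rat>" and "quadratic_roots f x y"
  shows "quadratic_roots (quadratic_orbit x f n) ((lehner_map ^^ n) x) (conjugate_orbit x y n)"
proof (induction n)
  case (Suc n)
  then show ?case
    using quadratic_roots_step[OF Suc lehner_orbit(3)[OF x]]
    by (simp add: lehner_map_eq_branch[of "(lehner_map ^^ n) x"])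
qed (use assms in simp)

lemma conjugate_orbit_not_Rats: "y \<notin> \<rat> \<Longrightarrow> conjugate_orbit x y n \<notin> \<rat>"
  by (induction n) (simp_all add: lehner_branch_not_Rats)

lemma lehner_branch_lt_one: "z < 1 \<or> 2 < z \<Longrightarrow> lehner_branch b z < 1"
  by (auto simp: lehner_branch_def divide_simps)

lemma conjugate_orbit_leaves_interval:
  assumes x: "1 < x" "x < 2" "x \<notin> \<rat>" and "y \<notin> \<rat>" "y \<noteq> x"
  shows "\<exists>n. \<not> (1 < conjugate_orbit x y n \<and> conjugate_orbit x y n < 2)"
proof (rule ccontr)
  assume "\<not> ?thesis"
  then have inside: "1 < conjugate_orbit x y n" "conjugate_orbit x y n < 2" for n by auto
  have same_branch: "(lehner_map ^^ n) x < 3/2 \<longleftrightarrow> conjugate_orbit x y n < 3/2" for n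
  proof
    assume "(lehner_map ^^ n) x < 3/2"
    then have "1 / (2 - conjugate_orbit x y n) < 2" using inside[of "Suc n"] by (simp add: lehner_branch_def)
    then show "conjugate_orbit x y n < 3/2" using inside[of n] by (simp add: divide_simps)
  next
    assume "conjugate_orbit x y n < 3/2"
    then have "2 < 1 / (conjugate_orbit x y n - 1)" using inside[of n] by (simp add: divide_simps)
    then show "(lehner_map ^^ n) x < 3/2"
      using inside[of "Suc n"] by (auto simp: lehner_branch_def split: if_splits)
  qed
  have "conjugate_orbit x y n = (lehner_map ^^ n) y" for n
  proof (induction n)
    case (Suc n)
    have "conjugate_orbit x y (Suc n) = lehner_branch (conjugate_orbit x y n < 3/2) (conjugate_orbit x y n)"
      using same_branch by simp
    then show ?case using Suc.IH lehner_map_eq_branch[of "(lehner_map ^^ n) y"] by simp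
  qed simp
  then have "lehner_digit x i = lehner_digit y i" for i
    using same_branch[of i] by (simp add: lehner_digit_eq_iff)
  then have "lehner_digit x = lehner_digit y" by blast
  moreover have "1 < y" "y < 2" using inside[of 0] by simp_all
  ultimately show False using lehner_digit_inj x assms(4,5) by blast
qed

lemma conjugate_orbit_eventually_lt_one:
  assumes x: "1 < x" "x < 2" "x \<notin> \<rat>" and "y \<notin> \<rat>" "y \<noteq> x"
  obtains n0 where "\<And>n. n0 \<le> n \<Longrightarrow> conjugate_orbit x y n < 1"
proof -
  obtain n1 where "\<not> (1 < conjugate_orbit x y n1 \<and> conjugate_orbit x y n1 < 2)"
    using conjugate_orbit_leaves_interval[OF assms] by blast
  moreover have "conjugate_orbit x y n1 \<noteq> 1" "conjugate_orbit x y n1 \<noteq> 2"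
    using conjugate_orbit_not_Rats[OF assms(4)] by (metis Rats_1, metis Rats_number_of)
  ultimately have escaped: "conjugate_orbit x y n1 < 1 \<or> 2 < conjugate_orbit x y n1" by linarith
  have "conjugate_orbit x y n < 1" if "Suc n1 \<le> n" for n
    using that
  proof (induction n rule: dec_induct)
    case base
    then show ?case using escaped by (simp add: lehner_branch_lt_one)
  next
    case (step n)
    then show ?case by (simp add: lehner_branch_lt_one)
  qed
  then show ?thesis using that by blast
qed

lemma abs_coeffs_le_discr:
  fixes A B C :: int
  assumes "A * C < 0"
  shows "\<bar>A\<bar> \<le> B^2 - 4 * A * C \<and> \<bar>B\<bar> \<le> B^2 - 4 * A * C \<and> \<bar>C\<bar> \<le> B^2 - 4 * A * C"
proof -
  have "A \<noteq> 0" "C \<noteq> 0" using assms by auto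
  then have "\<bar>A\<bar> \<le> \<bar>A\<bar> * \<bar>C\<bar>" "\<bar>C\<bar> \<le> \<bar>A\<bar> * \<bar>C\<bar>"
    by (simp_all add: mult_le_cancel_left1 mult_le_cancel_right1 int_one_le_iff_zero_less)
  moreover have "\<bar>A\<bar> * \<bar>C\<bar> = - (A * C)" using assms by (simp add: abs_mult[symmetric])
  moreover have "\<bar>B\<bar> \<le> B^2"
  proof (cases "B = 0")
    case False
    then have "\<bar>B\<bar> * 1 \<le> \<bar>B\<bar> * \<bar>B\<bar>" by (intro mult_left_mono) auto
    then show ?thesis by (simp add: power2_eq_square abs_mult_self_eq)
  qed simp
  ultimately show ?thesis using assms by linarith
qed

lemma quadratic_roots_opposite_signs:
  assumes "quadratic_roots (A, B, C) x y" "0 < x" "y < 0"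
  shows "A * C < 0"
proof -
  have "A \<noteq> 0" "of_int C = of_int A * x * y" using assms(1) by (simp_all add: quadratic_roots_def)
  then have "of_int (A * C) = (of_int A)^2 * (x * y)" by (simp add: power2_eq_square algebra_simps)
  also have "\<dots> < (0::real)" using \<open>A \<noteq> 0\<close> assms(2,3) by (simp add: mult_pos_neg)
  finally show ?thesis by (simp only: of_int_less_0_iff)
qed

lemma quadratic_roots_coeff_bound:
  assumes "quadratic_roots (A, B, C) x y" "1 < x" "y < 1"
  shows "\<bar>A\<bar> \<le> 3 * discr (A, B, C) \<and> \<bar>B\<bar> \<le> 3 * discr (A, B, C) \<and> \<bar>C\<bar> \<le> 3 * discr (A, B, C)"
proof -
  have "A * (A + B + C) < 0"
    using quadratic_roots_opposite_signs[OF quadratic_roots_shift[OF assms(1)]] assms(2,3) by simp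
  moreover have "discr (A, B, C) = (2 * A + B)^2 - 4 * A * (A + B + C)"
    by (simp add: discr_def power2_eq_square algebra_simps)
  ultimately show ?thesis using abs_coeffs_le_discr[of A "A + B + C" "2 * A + B"] by linarith
qed

lemma quadratic_roots_unique:
  assumes "quadratic_roots f x y" "quadratic_roots f u v"
  shows "u = x \<or> u = y"
proof -
  obtain A B C where f: "f = (A, B, C)" by (cases f) auto
  have A: "A \<noteq> 0"
    and xy: "of_int B = - of_int A * (x + y)" "of_int C = of_int A * x * y"
    and uv: "of_int B = - of_int A * (u + v)" "of_int C = of_int A * u * v"
    using assms by (simp_all add: f quadratic_roots_def)
  have "of_int A * (u - x) * (u - y) = of_int A * u^2 + of_int B * u + of_int C"
    unfolding xy by (simp add: algebra_simps power2_eq_square)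
  also have "\<dots> = 0"
    unfolding uv by (simp add: algebra_simps power2_eq_square)
  finally show ?thesis using A by simp
qed

lemma eventually_periodic_orbit:
  fixes f :: "'a \<Rightarrow> 'a" and g :: "'a \<Rightarrow> 'b"
  assumes "(f ^^ (m + p)) x = (f ^^ m) x" "p > 0"
  shows "eventually_periodic (\<lambda>i. g ((f ^^ i) x))"
  unfolding eventually_periodic_def
proof (rule exI[of _ m], rule exI[of _ p], intro conjI allI impI)
  fix i assume "m \<le> i"
  then have "i + p = (i - m) + (m + p)" "i = (i - m) + m" by simp_all
  then have "(f ^^ (i + p)) x = (f ^^ (i - m)) ((f ^^ (m + p)) x)" "(f ^^ i) x = (f ^^ (i - m)) ((f ^^ m) x)"
    by (metis funpow_add o_apply)+
  with assms(1) show "g ((f ^^ (i + p)) x) = g ((f ^^ i) x)" by simp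
qed (fact assms(2))

lemma quadratic_orbit_coeff_bound:
  assumes x: "1 < x" "x < 2" "x \<notin> \<rat>" and roots: "quadratic_roots f x y"
    and "conjugate_orbit x y n < 1"
  shows "quadratic_orbit x f n \<in>
    {- 3 * discr f .. 3 * discr f} \<times> {- 3 * discr f .. 3 * discr f} \<times> {- 3 * discr f .. 3 * discr f}"
proof -
  obtain A B C where ABC: "quadratic_orbit x f n = (A, B, C)" by (cases "quadratic_orbit x f n") auto
  have "\<bar>A\<bar> \<le> 3 * discr (A, B, C) \<and> \<bar>B\<bar> \<le> 3 * discr (A, B, C) \<and> \<bar>C\<bar> \<le> 3 * discr (A, B, C)"
    using quadratic_orbit_roots[OF x roots, of n] lehner_orbit(1)[OF x] assms(5)
    by (intro quadratic_roots_coeff_bound) (simp_all add: ABC)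
  moreover have "discr (A, B, C) = discr f" using discr_quadratic_orbit[of x f n] by (simp add: ABC)
  ultimately show ?thesis by (simp add: ABC abs_le_iff)
qed
lemma eventually_in_finite_repeats:
  fixes F :: "nat \<Rightarrow> 'a"
  assumes "finite S" and "\<And>n. n0 \<le> n \<Longrightarrow> F n \<in> S"
  obtains m n where "n0 \<le> m" "m < n" "F m = F n"
proof -
  have "F ` {n0..} \<subseteq> S" using assms(2) by auto
  then have "finite (F ` {n0..})" using assms(1) by (rule finite_subset)
  then have "\<not> inj_on F {n0..}" using finite_imageD infinite_Ici[of n0] by blast
  then obtain m n where "n0 \<le> m" "n0 \<le> n" "m \<noteq> n" "F m = F n" unfolding inj_on_def by auto
  then show ?thesis using that by (cases "m < n") (auto simp: linorder_neq_iff)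
qed
lemma quadratic_irrational_imp_eventually_periodic:
  assumes \<alpha>: "1 < \<alpha>" "\<alpha> < 2" "\<alpha> \<notin> \<rat>" and "quadratic_irrational \<alpha>"
  shows "eventually_periodic (lehner_digit \<alpha>)"
proof -
  obtain a b c :: int where "a \<noteq> 0" and root: "of_int a * \<alpha>^2 + of_int b * \<alpha> + of_int c = 0"
    using assms(4) unfolding quadratic_irrational_def by blast
  define \<beta> where "\<beta> = - of_int b / of_int a - \<alpha>"
  have c: "of_int c = - of_int b * \<alpha> - of_int a * \<alpha>^2" using root by linarith
  have roots: "quadratic_roots (a, b, c) \<alpha> \<beta>"
    using \<open>a \<noteq> 0\<close> by (simp add: quadratic_roots_def \<beta>_def c field_simps power2_eq_square)
  have "\<beta> \<noteq> \<alpha>"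
  proof
    assume "\<beta> = \<alpha>"
    then have "\<alpha> = - of_int b / (2 * of_int a)" using \<open>a \<noteq> 0\<close> by (simp add: \<beta>_def field_simps)
    with \<alpha>(3) show False by simp
  qed
  moreover have "\<beta> \<notin> \<rat>" using quadratic_roots_not_Rats[OF roots \<alpha>(3)] .
  ultimately obtain n0 where small: "\<And>n. n0 \<le> n \<Longrightarrow> conjugate_orbit \<alpha> \<beta> n < 1"
    using conjugate_orbit_eventually_lt_one[OF \<alpha>] by metis
  obtain m n where mn: "n0 \<le> m" "m < n" "quadratic_orbit \<alpha> (a, b, c) m = quadratic_orbit \<alpha> (a, b, c) n"
  proof (rule eventually_in_finite_repeats)
    show "quadratic_orbit \<alpha> (a, b, c) n \<in> {- 3 * discr (a, b, c) .. 3 * discr (a, b, c)} \<times>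
        {- 3 * discr (a, b, c) .. 3 * discr (a, b, c)} \<times> {- 3 * discr (a, b, c) .. 3 * discr (a, b, c)}"
      if "n0 \<le> n" for n
      using quadratic_orbit_coeff_bound[OF \<alpha> roots small[OF that]] .
  qed (auto intro: that)
  have "(lehner_map ^^ n) \<alpha> = (lehner_map ^^ m) \<alpha> \<or> (lehner_map ^^ n) \<alpha> = conjugate_orbit \<alpha> \<beta> m"
    using quadratic_roots_unique[OF quadratic_orbit_roots[OF \<alpha> roots, of m]]
      quadratic_orbit_roots[OF \<alpha> roots, of n] mn(3) by simp
  then have "(lehner_map ^^ n) \<alpha> = (lehner_map ^^ m) \<alpha>"
    using small[OF mn(1)] lehner_orbit(1)[OF \<alpha>, of n] by auto
  then have "(lehner_map ^^ (m + (n - m))) \<alpha> = (lehner_map ^^ m) \<alpha>" using mn(2) by simp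
  from eventually_periodic_orbit[OF this] mn(2) show ?thesis
    unfolding lehner_digit_def[abs_def] by simp
qed

theorem proposition6p4:
  fixes \<alpha> :: real
  assumes "1 < \<alpha>" and "\<alpha> < 2" and "\<alpha> \<notin> \<rat>"
  shows "eventually_periodic (lehner_digit \<alpha>) \<longleftrightarrow> quadratic_irrational \<alpha>"
  using eventually_periodic_imp_quadratic_irrational[OF assms]
    quadratic_irrational_imp_eventually_periodic[OF assms] by blast

end
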